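(* Let $\Delta$ be a finite saturated sample set, $\delta$ a $\Delta$-diagram, and $t$ a basic term. If the time warp $f$ strongly extends $D_t(\delta)$, then $f^\star$ strongly extends $D_{t'}(\delta)$.
   Context: Time warps: join-preserving maps $f\colon\omega^+\to\omega^+$, $\omega^+=\omega\cup\{\omega\}$, ordered pointwise; $p(m)=\bigvee\{k\in\omega\mid k<m\}$; $f^\star$ is the largest time warp $h$ with $f\circ h\le p$; $\mathrm{last}(f)=\min\{m\in\omega^+\mid f(m)=f(\omega)\}$. Basic terms are built from variables using $\cdot,{}',1$. Samples (formal expressions): $\alpha::=\kappa\mid t[\alpha]\mid \mathrm{suc}(\alpha)\mid\mathrm{last}(t)$ with $\kappa$ a time variable and $t$ a basic term. The relation $\leadsto$: $t[\alpha]\leadsto\alpha$, $\mathrm{suc}(\alpha)\leadsto\alpha$, $t[\alpha]\leadsto t[\mathrm{last}(t)]$, $(tu)[\alpha]\leadsto t[u[\alpha]]$, $t'[\alpha]\leadsto t[t'[\alpha]]$, $t'[\alpha]\leadsto t[\mathrm{suc}(t'[\alpha])]$; a sample set is saturated if closed under $\leadsto$. $S(n)=n+1$ for $n\in\omega$, $S(\omega)=\omega$. For saturated $\Delta$, a $\Delta$-diagram is $\delta\colon\Delta\to\omega^+$ such that, whenever the samples mentioned belong to $\Delta$: (1) $\delta(\alpha)\le\delta(\beta)\Rightarrow\delta(t[\alpha])\le\delta(t[\beta])$; (2) $\delta(\alpha)=0\Rightarrow\delta(t[\alpha])=0$; (3) $\delta(\mathrm{suc}(\alpha))=S(\delta(\alpha))$;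 (4) for $t[\alpha]\in\Delta$: $\delta(\mathrm{last}(t))\le\delta(\alpha)\iff\delta(t[\mathrm{last}(t)])=\delta(t[\alpha])$; (5) $\delta(\mathrm{last}(t))=\omega\Rightarrow\delta(t[\mathrm{last}(t)])=\omega$; (6) $\delta(1[\alpha])=\delta(\alpha)$; (7) $\delta(\mathrm{last}(1))=\omega$; (8) $\delta((tu)[\alpha])=\delta(t[u[\alpha]])$; (9) $\delta(\mathrm{last}(tu))=\omega\Rightarrow\delta(\mathrm{last}(t))=\delta(\mathrm{last}(u))=\omega$; (10) for $t'[\alpha]\in\Delta$: $0<\delta(\alpha)<\omega\Rightarrow\delta(t[t'[\alpha]])<\delta(\alpha)$; (11) for $t'[\alpha]\in\Delta$: $\delta(t'[\alpha])<\omega\Rightarrow\delta(\alpha)\le\delta(t[\mathrm{suc}(t'[\alpha])])$; (12) $\delta(\mathrm{last}(t'))=\omega\Rightarrow\delta(\mathrm{last}(t))=\omega$. For a basic term $t$, $D_t(\delta)=\{(\delta(\alpha),\delta(t[\alpha]))\mid t[\alpha]\in\Delta\}$. A time warp $f$ extends $D_t(\delta)$ if $f(i)=j$ for all $(i,j)\in D_t(\delta)$, and strongly extends it if moreover $D_t(\delta)\neq\emptyset$ and $\delta(\mathrm{last}(t))=\omega$ together imply $\mathrm{last}(f)=\omega$. *)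

theory Defs
  imports Main "HOL-Library.Extended_Nat"
begin

text \<open>omega^+ is rendered as enat, with omega = \<infinity>; the successor S is eSuc
  (eSuc \<infinity> = \<infinity>). Time warps are maps preserving all joins (including the
  empty join, so f 0 = 0).\<close>

definition time_warp :: "(enat \<Rightarrow> enat) \<Rightarrow> bool" where
  "time_warp f \<longleftrightarrow> (\<forall>A. f (Sup A) = Sup (f ` A))"

definition pred_tw :: "enat \<Rightarrow> enat" where
  "pred_tw m = Sup {enat k | k. enat k < m}"

definition tw_star :: "(enat \<Rightarrow> enat) \<Rightarrow> (enat \<Rightarrow> enat)" where
  "tw_star f = (GREATEST h. time_warp h \<and> (\<forall>x. f (h x) \<le> pred_tw x))"

definition tw_last :: "(enat \<Rightarrow> enat) \<Rightarrow> enat" where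
  "tw_last f = (LEAST m. f m = f \<infinity>)"

datatype 'v bterm = BVar 'v | BMult "'v bterm" "'v bterm" | BStar "'v bterm" | BOne

datatype ('v, 'k) sample =
    TVar 'k
  | App "'v bterm" "('v, 'k) sample"
  | SSuc "('v, 'k) sample"
  | SLast "'v bterm"

inductive leadsto :: "('v, 'k) sample \<Rightarrow> ('v, 'k) sample \<Rightarrow> bool" where
  l1: "leadsto (App t a) a"
| l2: "leadsto (SSuc a) a"
| l3: "leadsto (App t a) (App t (SLast t))"
| l4: "leadsto (App (BMult t u) a) (App t (App u a))"
| l5: "leadsto (App (BStar t) a) (App t (App (BStar t) a))"
| l6: "leadsto (App (BStar t) a) (App t (SSuc (App (BStar t) a)))"

definition saturated :: "('v, 'k) sample set \<Rightarrow> bool" where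
  "saturated D \<longleftrightarrow> (\<forall>a \<in> D. \<forall>b. leadsto a b \<longrightarrow> b \<in> D)"

definition diagram :: "('v, 'k) sample set \<Rightarrow> (('v, 'k) sample \<Rightarrow> enat) \<Rightarrow> bool" where
  "diagram D d \<longleftrightarrow>
    (\<forall>t a b. a \<in> D \<and> b \<in> D \<and> App t a \<in> D \<and> App t b \<in> D \<and> d a \<le> d b
        \<longrightarrow> d (App t a) \<le> d (App t b)) \<and>
    (\<forall>t a. a \<in> D \<and> App t a \<in> D \<and> d a = 0 \<longrightarrow> d (App t a) = 0) \<and>
    (\<forall>a. a \<in> D \<and> SSuc a \<in> D \<longrightarrow> d (SSuc a) = eSuc (d a)) \<and>
    (\<forall>t a. App t a \<in> D \<longrightarrow>
        (d (SLast t) \<le> d a \<longleftrightarrow> d (App t (SLast t)) = d (App t a))) \<and>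
    (\<forall>t. SLast t \<in> D \<and> App t (SLast t) \<in> D \<and> d (SLast t) = \<infinity>
        \<longrightarrow> d (App t (SLast t)) = \<infinity>) \<and>
    (\<forall>a. a \<in> D \<and> App BOne a \<in> D \<longrightarrow> d (App BOne a) = d a) \<and>
    (SLast BOne \<in> D \<longrightarrow> d (SLast BOne) = \<infinity>) \<and>
    (\<forall>t u a. App (BMult t u) a \<in> D \<and> App t (App u a) \<in> D
        \<longrightarrow> d (App (BMult t u) a) = d (App t (App u a))) \<and>
    (\<forall>t u. SLast (BMult t u) \<in> D \<and> SLast t \<in> D \<and> SLast u \<in> D \<and>
        d (SLast (BMult t u)) = \<infinity> \<longrightarrow> d (SLast t) = \<infinity> \<and> d (SLast u) = \<infinity>) \<and>
    (\<forall>t a. App (BStar t) a \<in> D \<and> 0 < d a \<and> d a < \<infinity>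
        \<longrightarrow> d (App t (App (BStar t) a)) < d a) \<and>
    (\<forall>t a. App (BStar t) a \<in> D \<and> d (App (BStar t) a) < \<infinity>
        \<longrightarrow> d a \<le> d (App t (SSuc (App (BStar t) a)))) \<and>
    (\<forall>t. SLast (BStar t) \<in> D \<and> SLast t \<in> D \<and> d (SLast (BStar t)) = \<infinity>
        \<longrightarrow> d (SLast t) = \<infinity>)"

definition Dt :: "('v, 'k) sample set \<Rightarrow> (('v, 'k) sample \<Rightarrow> enat) \<Rightarrow> 'v bterm \<Rightarrow> (enat \<times> enat) set" where
  "Dt D d t = {(d a, d (App t a)) | a. App t a \<in> D}"

definition extends_tw :: "(enat \<Rightarrow> enat) \<Rightarrow> (enat \<times> enat) set \<Rightarrow> bool" where
  "extends_tw f R \<longleftrightarrow> (\<forall>(i, j) \<in> R. f i = j)"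

definition strongly_extends ::
  "('v, 'k) sample set \<Rightarrow> (('v, 'k) sample \<Rightarrow> enat) \<Rightarrow> 'v bterm \<Rightarrow> (enat \<Rightarrow> enat) \<Rightarrow> bool" where
  "strongly_extends D d t f \<longleftrightarrow> extends_tw f (Dt D d t) \<and>
     (Dt D d t \<noteq> {} \<and> d (SLast t) = \<infinity> \<longrightarrow> tw_last f = \<infinity>)"

end

theory Submission
  imports Defs "HOL-Library.Infinite_Set"
begin

text \<open>The residual f* is adjoint to f: f(b) < x implies b \<le> f*(x), and x \<le> f(b + 1) implies
  f*(x) \<le> b for finite b. Hence f*(x) = b as soon as f(b) < x \<le> f(b + 1) (the second
  condition only for finite b). For a sample t'[\<alpha>] with
  \<delta>(\<alpha>) = x and b = \<delta>(t'[\<alpha>]), the diagram axioms supply exactly these inequalities: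
  (10) gives f(b) < x for finite x, and (11), read through the sample t[suc(t'[\<alpha>])], gives
  x \<le> f(b + 1). At x = \<omega>, axiom (4) identifies b with the value at t'[last(t')]. Either
  \<delta>(last(t')) = \<omega>, and then (12) and the strong extension force last(f) = \<omega>, whence
  f*(\<omega>) = \<omega> = b; or \<delta>(last(t')) is finite, and (10) at last(t') makes f(b) finite.
  Finally, last(f) = \<omega> means that f is finite on \<omega> with f(\<omega>) = \<omega>, so f* is finite on \<omega>
  and unbounded, i.e. last(f*) = \<omega>.\<close>

section \<open>Time warps\<close>

lemma time_warp_monoD:
  assumes "time_warp f" and "x \<le> y"
  shows "f x \<le> f y"
proof -
  have "f y = f (Sup {x, y})"
    using \<open>x \<le> y\<close> by (simp add: sup_absorb2)
  also have "\<dots> = sup (f x) (f y)"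
    using assms(1)[unfolded time_warp_def, rule_format, of "{x, y}"] by simp
  finally show ?thesis
    by (simp add: le_iff_sup)
qed

lemma time_warp_0:
  assumes "time_warp f"
  shows "f 0 = 0"
  using assms[unfolded time_warp_def, rule_format, of "{}"] by (simp add: bot_enat_def)

lemma Sup_range_enat: "Sup (range enat) = \<infinity>"
  using range_inj_infinite[of enat] by (simp add: Sup_enat_def inj_on_def)

lemma time_warp_infinity:
  assumes "time_warp f"
  shows "f \<infinity> = (SUP k. f (enat k))"
  using assms[unfolded time_warp_def, rule_format, of "range enat"]
  by (simp add: Sup_range_enat image_image)

lemma time_warp_infinity_attained:
  assumes "time_warp f" and "f \<infinity> < \<infinity>"
  obtains k where "f (enat k) = f \<infinity>"
proof -
  have "Sup (range (\<lambda>k. f (enat k))) < \<infinity>"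
    using assms by (simp add: time_warp_infinity)
  then have "finite (range (\<lambda>k. f (enat k)))"
    by (auto simp: Sup_enat_def split: if_splits)
  then have "Sup (range (\<lambda>k. f (enat k))) \<in> range (\<lambda>k. f (enat k))"
    by (simp add: Sup_enat_def)
  then show ?thesis
    using that time_warp_infinity[OF assms(1)] by auto
qed

lemma time_warp_step: "time_warp (\<lambda>x. if enat n < x then m else 0)"
  unfolding time_warp_def
proof
  fix A :: "enat set"
  show "(if enat n < Sup A then m else 0) = (SUP a\<in>A. if enat n < a then m else 0)"
  proof (cases "\<exists>a\<in>A. enat n < a")
    case True
    then obtain a where "a \<in> A" and "enat n < a"
      by blast
    then have "m \<le> (SUP a\<in>A. if enat n < a then m else 0)"
      by (intro SUP_upper2[OF \<open>a \<in> A\<close>]) simp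
    then have "(SUP a\<in>A. if enat n < a then m else 0) = m"
      by (intro antisym SUP_least) auto
    with True show ?thesis
      by (simp add: less_Sup_iff)
  next
    case False
    then have "(SUP a\<in>A. if enat n < a then m else 0) = 0"
      by (intro antisym SUP_least) auto
    with False show ?thesis
      by (simp add: less_Sup_iff)
  qed
qed

lemma tw_last_eq_infinity_iff: "tw_last f = \<infinity> \<longleftrightarrow> (\<forall>k. f (enat k) \<noteq> f \<infinity>)"
proof
  assume last: "tw_last f = \<infinity>"
  show "\<forall>k. f (enat k) \<noteq> f \<infinity>"
  proof (intro allI notI)
    fix k
    assume "f (enat k) = f \<infinity>"
    then have "tw_last f \<le> enat k"
      unfolding tw_last_def by (rule Least_le)
    with last show False
      by simp
  qed
next
  assume finite_differ: "\<forall>k. f (enat k) \<noteq> f \<infinity>"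
  show "tw_last f = \<infinity>"
    unfolding tw_last_def
  proof (rule Least_equality)
    show "\<infinity> \<le> y" if "f y = f \<infinity>" for y
      using finite_differ that by (cases y) auto
  qed simp
qed

lemma tw_last_infinity_unbounded:
  assumes "time_warp f" and "tw_last f = \<infinity>"
  shows "f \<infinity> = \<infinity>"
proof (rule ccontr)
  assume "f \<infinity> \<noteq> \<infinity>"
  then have "f \<infinity> < \<infinity>"
    by (cases "f \<infinity>") auto
  then obtain k where "f (enat k) = f \<infinity>"
    by (rule time_warp_infinity_attained[OF assms(1)])
  with assms(2) show False
    by (simp add: tw_last_eq_infinity_iff)
qed

section \<open>The residual time warp\<close>

lemma enat_le_pred_tw: "enat k < x \<Longrightarrow> enat k \<le> pred_tw x"
  unfolding pred_tw_def by (rule Sup_upper) auto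

lemma pred_tw_enat_Suc: "pred_tw (enat (Suc n)) = enat n"
  unfolding pred_tw_def by (rule antisym, rule Sup_least) (auto intro: Sup_upper)

definition star_admissible :: "(enat \<Rightarrow> enat) \<Rightarrow> (enat \<Rightarrow> enat) set" where
  "star_admissible f = {h. time_warp h \<and> (\<forall>x. f (h x) \<le> pred_tw x)}"

text \<open>Pointwise joins of admissible time warps are admissible, since joins commute with joins
  and f preserves them; so the greatest admissible time warp exists and is their join.\<close>

lemma Sup_star_admissible:
  assumes "time_warp f"
  shows "Sup (star_admissible f) \<in> star_admissible f"
proof -
  let ?g = "Sup (star_admissible f)"
  have "?g (Sup A) = Sup (?g ` A)" for A
  proof -
    have "?g (Sup A) = (SUP h\<in>star_admissible f. SUP a\<in>A. h a)"
      by (auto simp: star_admissible_def time_warp_def intro: SUP_cong)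
    also have "\<dots> = (SUP a\<in>A. SUP h\<in>star_admissible f. h a)"
      by (rule SUP_commute)
    finally show ?thesis
      by simp
  qed
  moreover have "f (?g x) \<le> pred_tw x" for x
  proof -
    have "f (?g x) = Sup (f ` (\<lambda>h. h x) ` star_admissible f)"
      using assms by (simp add: time_warp_def image_image)
    also have "\<dots> \<le> pred_tw x"
      by (rule Sup_least) (auto simp: star_admissible_def)
    finally show ?thesis .
  qed
  ultimately show ?thesis
    unfolding star_admissible_def time_warp_def by blast
qed

lemma tw_star_eq_Sup:
  assumes "time_warp f"
  shows "tw_star f = Sup (star_admissible f)"
  unfolding tw_star_def
proof (rule Greatest_equality)
  show "time_warp (Sup (star_admissible f)) \<and> (\<forall>x. f (Sup (star_admissible f) x) \<le> pred_tw x)"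
    using Sup_star_admissible[OF assms] by (simp add: star_admissible_def)
qed (simp add: Sup_upper star_admissible_def)

lemma time_warp_tw_star:
  assumes "time_warp f"
  shows "time_warp (tw_star f)"
  using Sup_star_admissible[OF assms] by (simp add: tw_star_eq_Sup[OF assms] star_admissible_def)

lemma tw_star_le_pred_tw:
  assumes "time_warp f"
  shows "f (tw_star f x) \<le> pred_tw x"
  using Sup_star_admissible[OF assms] by (simp add: tw_star_eq_Sup[OF assms] star_admissible_def)

lemma tw_star_greatest:
  assumes "time_warp f" and "time_warp h" and "\<And>x. f (h x) \<le> pred_tw x"
  shows "h x \<le> tw_star f x"
proof -
  have "h \<le> Sup (star_admissible f)"
    using assms by (intro Sup_upper) (simp add: star_admissible_def)
  then show ?thesis
    by (simp add: tw_star_eq_Sup[OF assms(1)] le_fun_def)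
qed

lemma tw_star_0:
  assumes "time_warp f"
  shows "tw_star f 0 = 0"
  using time_warp_0[OF time_warp_tw_star[OF assms]] .

lemma tw_star_less:
  assumes "time_warp f" and "0 < n"
  shows "f (tw_star f (enat n)) < enat n"
proof -
  obtain m where "n = Suc m"
    using \<open>0 < n\<close> gr0_implies_Suc by blast
  then show ?thesis
    using tw_star_le_pred_tw[OF assms(1), of "enat n"]
    by (cases "f (tw_star f (enat n))") (simp_all add: pred_tw_enat_Suc)
qed

text \<open>The witness is the step time warp sending everything above f m to m.\<close>

lemma tw_star_lower:
  assumes "time_warp f" and "f m < x"
  shows "m \<le> tw_star f x"
proof -
  obtain j where j: "f m = enat j"
    using \<open>f m < x\<close> by (cases "f m") auto
  let ?h = "\<lambda>y. if enat j < y then m else 0"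
  have "f (?h y) \<le> pred_tw y" for y
    using j enat_le_pred_tw time_warp_0[OF assms(1)] by auto
  then have "m \<le> tw_star f (enat (Suc j))"
    using tw_star_greatest[OF assms(1) time_warp_step, of j m "enat (Suc j)"] by simp
  also have "\<dots> \<le> tw_star f x"
    using assms j by (intro time_warp_monoD[OF time_warp_tw_star]) (simp_all add: Suc_ile_eq)
  finally show ?thesis .
qed

lemma tw_star_upper:
  assumes "time_warp f" and "x \<le> f (enat (Suc k))"
  shows "tw_star f x \<le> enat k"
proof -
  have finite_case: "tw_star f (enat n) \<le> enat k" if "enat n \<le> x" for n
  proof (rule ccontr)
    assume above: "\<not> tw_star f (enat n) \<le> enat k"
    then have "0 < n"
      using tw_star_0[OF assms(1)] by (cases n) (simp_all add: zero_enat_def)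
    have "f (enat (Suc k)) \<le> f (tw_star f (enat n))"
      using above by (intro time_warp_monoD[OF assms(1)]) (simp add: Suc_ile_eq)
    also have "\<dots> < enat n"
      using tw_star_less[OF assms(1) \<open>0 < n\<close>] .
    also have "\<dots> \<le> f (enat (Suc k))"
      using that assms(2) by (rule order_trans)
    finally show False
      by simp
  qed
  show ?thesis
  proof (cases x)
    case (enat n)
    then show ?thesis
      using finite_case by simp
  next
    case infinity
    then show ?thesis
      using finite_case by (simp add: time_warp_infinity[OF time_warp_tw_star[OF assms(1)]] SUP_least)
  qed
qed

lemma tw_star_eqI:
  assumes "time_warp f" and "f b < x" and "b < \<infinity> \<Longrightarrow> x \<le> f (eSuc b)"
  shows "tw_star f x = b"
proof (cases b)
  case (enat k)
  then have "tw_star f x \<le> b"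
    using assms by (simp add: tw_star_upper eSuc_enat)
  then show ?thesis
    using tw_star_lower[OF assms(1,2)] by (rule antisym)
next
  case infinity
  then show ?thesis
    using tw_star_lower[OF assms(1,2)] by simp
qed

lemma tw_star_infinity_of_tw_last:
  assumes "time_warp f" and "tw_last f = \<infinity>"
  shows "tw_star f \<infinity> = \<infinity>"
proof (rule ccontr)
  assume "tw_star f \<infinity> \<noteq> \<infinity>"
  then obtain K where K: "tw_star f \<infinity> = enat K"
    by auto
  have "f (enat (Suc K)) \<noteq> f \<infinity>"
    using assms(2) by (simp add: tw_last_eq_infinity_iff)
  moreover have "f \<infinity> = \<infinity>"
    using tw_last_infinity_unbounded[OF assms] .
  ultimately have "enat (Suc K) \<le> tw_star f \<infinity>"
    by (intro tw_star_lower[OF assms(1)]) (simp add: less_le)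
  with K show False
    by simp
qed

lemma tw_last_tw_star:
  assumes "time_warp f" and "tw_last f = \<infinity>"
  shows "tw_last (tw_star f) = \<infinity>"
  unfolding tw_last_eq_infinity_iff tw_star_infinity_of_tw_last[OF assms]
proof
  fix n
  show "tw_star f (enat n) \<noteq> \<infinity>"
  proof (cases n)
    case 0
    then show ?thesis
      using tw_star_0[OF assms(1)] by (simp add: zero_enat_def)
  next
    case (Suc m)
    then show ?thesis
      using tw_star_less[OF assms(1), of n] tw_last_infinity_unbounded[OF assms]
      by (cases "tw_star f (enat n)") auto
  qed
qed

lemma saturatedD: "saturated D \<Longrightarrow> a \<in> D \<Longrightarrow> leadsto a b \<Longrightarrow> b \<in> D"
  unfolding saturated_def by blast

lemma diagram_App_zero:
  "diagram D d \<Longrightarrow> a \<in> D \<Longrightarrow> App t a \<in> D \<Longrightarrow> d a = 0 \<Longrightarrow> d (App t a) = 0"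
  unfolding diagram_def by (elim conjE) meson

lemma diagram_SSuc: "diagram D d \<Longrightarrow> a \<in> D \<Longrightarrow> SSuc a \<in> D \<Longrightarrow> d (SSuc a) = eSuc (d a)"
  unfolding diagram_def by (elim conjE) meson

lemma diagram_SLast_le_iff:
  "diagram D d \<Longrightarrow> App t a \<in> D \<Longrightarrow>
    d (SLast t) \<le> d a \<longleftrightarrow> d (App t (SLast t)) = d (App t a)"
  unfolding diagram_def by (elim conjE) meson

lemma diagram_App_SLast_infinity:
  "diagram D d \<Longrightarrow> SLast t \<in> D \<Longrightarrow> App t (SLast t) \<in> D \<Longrightarrow> d (SLast t) = \<infinity> \<Longrightarrow>
    d (App t (SLast t)) = \<infinity>"
  unfolding diagram_def by (elim conjE) meson

lemma diagram_BStar_less: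
  "diagram D d \<Longrightarrow> App (BStar t) a \<in> D \<Longrightarrow> 0 < d a \<Longrightarrow> d a < \<infinity> \<Longrightarrow>
    d (App t (App (BStar t) a)) < d a"
  unfolding diagram_def by (elim conjE) meson

lemma diagram_BStar_le:
  "diagram D d \<Longrightarrow> App (BStar t) a \<in> D \<Longrightarrow> d (App (BStar t) a) < \<infinity> \<Longrightarrow>
    d a \<le> d (App t (SSuc (App (BStar t) a)))"
  unfolding diagram_def by (elim conjE) meson

lemma diagram_SLast_BStar:
  "diagram D d \<Longrightarrow> SLast (BStar t) \<in> D \<Longrightarrow> SLast t \<in> D \<Longrightarrow> d (SLast (BStar t)) = \<infinity> \<Longrightarrow>
    d (SLast t) = \<infinity>"
  unfolding diagram_def by (elim conjE) meson

lemma strongly_extendsD: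
  "strongly_extends D d t f \<Longrightarrow> App t a \<in> D \<Longrightarrow> f (d a) = d (App t a)"
  unfolding strongly_extends_def extends_tw_def Dt_def by fastforce

lemma strongly_extends_tw_last:
  "strongly_extends D d t f \<Longrightarrow> App t a \<in> D \<Longrightarrow> d (SLast t) = \<infinity> \<Longrightarrow> tw_last f = \<infinity>"
  unfolding strongly_extends_def Dt_def by blast

section \<open>Extending the diagram along a starred term\<close>

lemma tw_last_of_SLast_BStar:
  assumes sat: "saturated D" and dg: "diagram D d" and ext: "strongly_extends D d t f"
    and a: "App (BStar t) a \<in> D" and last: "d (SLast (BStar t)) = \<infinity>"
  shows "tw_last f = \<infinity>"
proof -
  have step: "App t (App (BStar t) a) \<in> D"
    using saturatedD[OF sat a l5] .
  have "App t (SLast t) \<in> D"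
    using saturatedD[OF sat step l3] .
  then have "SLast t \<in> D"
    using saturatedD[OF sat _ l1] by blast
  moreover have "SLast (BStar t) \<in> D"
    using saturatedD[OF sat saturatedD[OF sat a l3] l1] .
  ultimately have "d (SLast t) = \<infinity>"
    using diagram_SLast_BStar[OF dg _ _ last] by blast
  then show ?thesis
    using strongly_extends_tw_last[OF ext step] by blast
qed

lemma finite_at_SLast_BStar:
  assumes sat: "saturated D" and dg: "diagram D d" and ext: "strongly_extends D d t f"
    and c: "App (BStar t) (SLast (BStar t)) \<in> D" (is "?c \<in> D")
    and finite: "d (SLast (BStar t)) < \<infinity>"
  shows "f (d ?c) < \<infinity>"
proof -
  have step: "App t ?c \<in> D"
    using saturatedD[OF sat c l5] .
  have "SLast (BStar t) \<in> D"
    using saturatedD[OF sat c l1] .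
  consider "d (SLast (BStar t)) = 0" | "0 < d (SLast (BStar t))"
    by auto
  then have "d (App t ?c) < \<infinity>"
  proof cases
    case 1
    then have "d ?c = 0"
      using diagram_App_zero[OF dg \<open>SLast (BStar t) \<in> D\<close> c] by simp
    then show ?thesis
      using diagram_App_zero[OF dg c step] by simp
  next
    case 2
    then have "d (App t ?c) < d (SLast (BStar t))"
      using diagram_BStar_less[OF dg c] finite by simp
    then show ?thesis
      using finite by (rule less_trans)
  qed
  then show ?thesis
    using strongly_extendsD[OF ext step] by simp
qed

lemma tw_star_extends_BStar:
  assumes sat: "saturated D" and dg: "diagram D d" and tw: "time_warp f"
    and ext: "strongly_extends D d t f" and a: "App (BStar t) a \<in> D"
  shows "tw_star f (d a) = d (App (BStar t) a)"
proof -
  define b where "b = d (App (BStar t) a)"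
  have "a \<in> D"
    using saturatedD[OF sat a l1] .
  have step: "App t (App (BStar t) a) \<in> D"
    using saturatedD[OF sat a l5] .
  have suc_step: "App t (SSuc (App (BStar t) a)) \<in> D"
    using saturatedD[OF sat a l6] .
  have "SSuc (App (BStar t) a) \<in> D"
    using saturatedD[OF sat suc_step l1] .
  then have "f (eSuc b) = d (App t (SSuc (App (BStar t) a)))"
    using strongly_extendsD[OF ext suc_step] diagram_SSuc[OF dg a] by (simp add: b_def)
  then have above: "d a \<le> f (eSuc b)" if "b < \<infinity>"
    using diagram_BStar_le[OF dg a] that by (simp add: b_def)
  have f_b: "f b = d (App t (App (BStar t) a))"
    unfolding b_def using strongly_extendsD[OF ext step] .
  consider "d a = 0" | "0 < d a" "d a < \<infinity>" | "d a = \<infinity>"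
    by auto
  then show ?thesis
  proof cases
    case 1
    then show ?thesis
      using diagram_App_zero[OF dg \<open>a \<in> D\<close> a] tw_star_0[OF tw] by simp
  next
    case 2
    then have "f b < d a"
      using diagram_BStar_less[OF dg a] f_b by simp
    then show ?thesis
      using tw_star_eqI[OF tw _ above] by (simp add: b_def)
  next
    case 3
    let ?c = "App (BStar t) (SLast (BStar t))"
    have c: "?c \<in> D"
      using saturatedD[OF sat a l3] .
    have "d ?c = b"
      using diagram_SLast_le_iff[OF dg a] 3 by (simp add: b_def)
    show ?thesis
    proof (cases "d (SLast (BStar t)) = \<infinity>")
      case True
      have "SLast (BStar t) \<in> D"
        using saturatedD[OF sat c l1] .
      then have "b = \<infinity>"
        using diagram_App_SLast_infinity[OF dg _ c True] \<open>d ?c = b\<close> by simp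
      then show ?thesis
        using tw_star_infinity_of_tw_last[OF tw tw_last_of_SLast_BStar[OF sat dg ext a True]] 3
        by (simp add: b_def)
    next
      case False
      then have "f b < \<infinity>"
        using finite_at_SLast_BStar[OF sat dg ext c] \<open>d ?c = b\<close> by (simp add: less_le)
      then show ?thesis
        using tw_star_eqI[OF tw _ above] 3 by (simp add: b_def)
    qed
  qed
qed

theorem lemma3p6:
  fixes D :: "('v, 'k) sample set" and d :: "('v, 'k) sample \<Rightarrow> enat"
    and t :: "'v bterm" and f :: "enat \<Rightarrow> enat"
  assumes "finite D" and "saturated D" and "diagram D d"
    and "time_warp f"
    and "strongly_extends D d t f"
  shows "strongly_extends D d (BStar t) (tw_star f)"
proof -
  note sat = assms(2) and dg = assms(3) and tw = assms(4) and ext = assms(5)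
  have "tw_star f i = j" if "(i, j) \<in> Dt D d (BStar t)" for i j
    using that tw_star_extends_BStar[OF sat dg tw ext] unfolding Dt_def by blast
  moreover have "tw_last (tw_star f) = \<infinity>"
    if nonempty: "Dt D d (BStar t) \<noteq> {}" and last: "d (SLast (BStar t)) = \<infinity>"
  proof -
    obtain a where "App (BStar t) a \<in> D"
      using nonempty unfolding Dt_def by blast
    then have "tw_last f = \<infinity>"
      using tw_last_of_SLast_BStar[OF sat dg ext _ last] by blast
    then show ?thesis
      using tw_last_tw_star[OF tw] by blast
  qed
  ultimately show ?thesis
    unfolding strongly_extends_def extends_tw_def by blast
qed

end
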